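(* Let $n\ge 4$ and let $G$ be the complete sun graph on $2n$ vertices. Then for every integer $r\ge 3$, the $r$-th power of $G$ satisfies $\varphi(G^r)=(n-1)(2n-1)$.
   Context: All graphs are finite, simple and without isolated vertices. $\mathbb{N}_0$ denotes the set of non-negative integers; for finite $A,B\subseteq\mathbb{N}_0$, $A+B=\{a+b: a\in A, b\in B\}$. An integer additive set-indexer (IASI) of a graph $G$ is an injective map $f$ from $V(G)$ to the finite non-empty subsets of $\mathbb{N}_0$ such that the induced edge map $f^+(uv)=f(u)+f(v)$ is injective on $E(G)$. A weak IASI (WIASI) is an IASI $f$ with $|f^+(uv)|=\max(|f(u)|,|f(v)|)$ for every edge $uv$ (equivalently, for every edge at least one end vertex has a singleton label). A vertex or edge is mono-indexed if its set-label has cardinality $1$. Every graph admits a WIASI. The sparing number $\varphi(G)$ is the minimum, over all WIASIs of $G$, of the number of mono-indexed edges of $G$. The $r$-th power $G^r$ has vertex set $V(G)$, two distinct vertices being adjacent iff their distance in $G$ is at most $r$. The complete sun graph on $2n$ vertices ($n\ge 3$) has vertex set $U\cup W$ with $U=\{u_1,\dots,u_n\}$, $W=\{w_1,\dots,w_n\}$, where $U$ induces a complete graph, $W$ is an independent set, and $w_j$ is adjacent to $u_i$ if and only if $j=i$ or $j\equiv i+1 \pmod n$. *)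

theory Defs
  imports Main
begin

text \<open>A simple graph is given by a vertex set V and a set E of 2-element subsets of V.\<close>

definition sumset :: "nat set \<Rightarrow> nat set \<Rightarrow> nat set" where
  "sumset A B = {a + b | a b. a \<in> A \<and> b \<in> B}"

text \<open>Integer additive set-indexer: injective labelling of vertices by finite nonempty
  subsets of the naturals, whose induced edge map uv \<mapsto> f u + f v is injective on E.\<close>
definition iasi :: "'a set \<Rightarrow> 'a set set \<Rightarrow> ('a \<Rightarrow> nat set) \<Rightarrow> bool" where
  "iasi V E f \<longleftrightarrow>
     (\<forall>v\<in>V. finite (f v) \<and> f v \<noteq> {}) \<and> inj_on f V \<and>
     (\<forall>u v x y. {u, v} \<in> E \<longrightarrow> {x, y} \<in> E \<longrightarrow>
        sumset (f u) (f v) = sumset (f x) (f y) \<longrightarrow> {u, v} = {x, y})"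

definition wiasi :: "'a set \<Rightarrow> 'a set set \<Rightarrow> ('a \<Rightarrow> nat set) \<Rightarrow> bool" where
  "wiasi V E f \<longleftrightarrow> iasi V E f \<and>
     (\<forall>u v. {u, v} \<in> E \<longrightarrow> u \<noteq> v \<longrightarrow>
        card (sumset (f u) (f v)) = max (card (f u)) (card (f v)))"

definition mono_edges :: "'a set set \<Rightarrow> ('a \<Rightarrow> nat set) \<Rightarrow> 'a set set" where
  "mono_edges E f = {e \<in> E. \<exists>u v. e = {u, v} \<and> u \<noteq> v \<and> card (sumset (f u) (f v)) = 1}"

definition sparing_number :: "'a set \<Rightarrow> 'a set set \<Rightarrow> nat" where
  "sparing_number V E = (LEAST k. \<exists>f. wiasi V E f \<and> k = card (mono_edges E f))"

text \<open>Walks given as vertex lists; distance at most r means a walk with at most r edges.\<close>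
definition within_dist :: "'a set set \<Rightarrow> nat \<Rightarrow> 'a \<Rightarrow> 'a \<Rightarrow> bool" where
  "within_dist E r u v \<longleftrightarrow> (\<exists>xs. xs \<noteq> [] \<and> hd xs = u \<and> last xs = v \<and>
      length xs \<le> r + 1 \<and> (\<forall>i < length xs - 1. {xs ! i, xs ! Suc i} \<in> E))"

definition graph_power :: "'a set \<Rightarrow> 'a set set \<Rightarrow> nat \<Rightarrow> 'a set set" where
  "graph_power V E r = {{u, v} | u v. u \<in> V \<and> v \<in> V \<and> u \<noteq> v \<and> within_dist E r u v}"

text \<open>Complete sun graph on 2n vertices: u_i = Inl i, w_j = Inr j, indices 0..n-1;
  w_j adjacent to u_i iff j = i or j = (i+1) mod n.\<close>
definition sun_V :: "nat \<Rightarrow> (nat + nat) set" where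
  "sun_V n = Inl ` {..<n} \<union> Inr ` {..<n}"

definition sun_E :: "nat \<Rightarrow> (nat + nat) set set" where
  "sun_E n = {{Inl i, Inl k} | i k. i < n \<and> k < n \<and> i \<noteq> k}
           \<union> {{Inl i, Inr j} | i j. i < n \<and> j < n \<and> (j = i \<or> j = (i + 1) mod n)}"

end

theory Submission
  imports Defs
begin

(* The proof has two independent halves.

   (1) For r >= 3 the r-th power of the complete sun graph is the complete graph
       on its 2n vertices: every vertex w_j hangs off the clique vertex u_j, so any
       two vertices are joined by a walk of length at most 3.

   (2) The sparing number of a complete graph on m >= 1 vertices is (m-1) choose 2.
       Lower bound: in a weak IASI the vertices with non-singleton labels form an
       independent set (a sumset of two sets of size >= 2 is strictly larger than
       both), so in a complete graph at most one vertex is not mono-indexed, and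
       all edges among the other >= m-1 vertices are mono-indexed.
       Upper bound: label the vertices by distinct powers of two and add 0 to the
       label of one vertex s; pair sums of distinct powers of two are distinct, so
       this is a weak IASI whose mono-indexed edges are exactly those avoiding s.

   The theorem follows with m = 2n, since (2n-1) choose 2 = (n-1)(2n-1). *)

lemma sumset_finite: "finite A \<Longrightarrow> finite B \<Longrightarrow> finite (sumset A B)"
proof -
  assume "finite A" "finite B"
  have "sumset A B = (\<lambda>(a, b). a + b) ` (A \<times> B)" unfolding sumset_def by auto
  thus ?thesis using \<open>finite A\<close> \<open>finite B\<close> by simp
qed

lemma sumset_comm: "sumset A B = sumset B A"
  unfolding sumset_def by (force simp: add.commute)

lemma sumset_singletons: "sumset {a} {b} = {a + b}"
  unfolding sumset_def by auto

lemma sumset_zero_insert: "sumset {0, a} {b} = {b, a + b}"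
  unfolding sumset_def by auto

text \<open>The largest element of a sumset is the sum of the largest elements; this lets us
  read off the pair of vertices from an edge label in the upper-bound construction.\<close>
lemma sumset_Max:
  assumes "finite A" "A \<noteq> {}" "finite B" "B \<noteq> {}"
  shows "Max (sumset A B) = Max A + Max B"
proof (rule Max_eqI)
  show "finite (sumset A B)" using assms sumset_finite by blast
  show "Max A + Max B \<in> sumset A B"
    using assms Max_in[of A] Max_in[of B] unfolding sumset_def by blast
  fix y assume "y \<in> sumset A B"
  then obtain a b where "y = a + b" "a \<in> A" "b \<in> B" unfolding sumset_def by blast
  thus "y \<le> Max A + Max B" using assms by (simp add: add_mono)
qed

text \<open>Adding a set with at least two elements strictly enlarges a nonempty finite set:
  the translate A + min B misses max A + max B.  This is why a weak IASI cannot have an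
  edge whose two end labels both have size at least 2.\<close>
lemma card_lt_card_sumset:
  assumes A: "finite A" "A \<noteq> {}" and B: "finite B" "card B \<ge> 2"
  shows "card A < card (sumset A B)"
proof -
  obtain C where "C \<subseteq> B" "card C = 2" using obtain_subset_with_card_n[OF B(2)] .
  then obtain x y where xy: "x \<in> B" "y \<in> B" "x \<noteq> y" by (auto simp: card_2_iff)
  have "B \<noteq> {}" using xy by blast
  have "Min B \<le> x" "x \<le> Max B" "Min B \<le> y" "y \<le> Max B" using xy B(1) by simp_all
  hence "Min B < Max B" using xy(3) by arith
  define T where "T = (\<lambda>a. a + Min B) ` A"
  have card_T: "card T = card A" unfolding T_def by (simp add: card_image inj_on_def)
  have new: "Max A + Max B \<notin> T"
    using \<open>Min B < Max B\<close> Max_ge[OF A(1)] unfolding T_def by fastforce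
  have "insert (Max A + Max B) T \<subseteq> sumset A B"
    using A \<open>B \<noteq> {}\<close> B(1) Max_in Min_in unfolding T_def sumset_def by blast
  hence "card (insert (Max A + Max B) T) \<le> card (sumset A B)"
    using sumset_finite[OF A(1) B(1)] by (rule card_mono[rotated])
  thus ?thesis using new card_T A(1) unfolding T_def by simp
qed

text \<open>For a < b the larger exponent of 2^a + 2^b is determined, since the sum lies in
  [2^b, 2^(b+1)).\<close>
lemma pow2_pair_ordered:
  assumes "a < b" "c < d" "(2::nat) ^ a + 2 ^ b = 2 ^ c + 2 ^ d"
  shows "a = c \<and> b = d"
proof -
  have below_next: "(2::nat) ^ i + 2 ^ j < 2 ^ Suc j" if "i < j" for i j
    using that by simp
  have "\<not> b < d"
  proof
    assume "b < d"
    have "(2::nat) ^ a + 2 ^ b < 2 ^ Suc b" using below_next[OF assms(1)] .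
    also have "\<dots> \<le> 2 ^ d" using \<open>b < d\<close> by (intro power_increasing) simp_all
    finally show False using assms(3) by simp
  qed
  moreover have "\<not> d < b"
  proof
    assume "d < b"
    have "(2::nat) ^ c + 2 ^ d < 2 ^ Suc d" using below_next[OF assms(2)] .
    also have "\<dots> \<le> 2 ^ b" using \<open>d < b\<close> by (intro power_increasing) simp_all
    finally show False using assms(3) by simp
  qed
  ultimately have "b = d" by simp
  with assms(3) show ?thesis by simp
qed

lemma pow2_pair:
  assumes "a \<noteq> b" "c \<noteq> d" "(2::nat) ^ a + 2 ^ b = 2 ^ c + 2 ^ d"
  shows "{a, b} = {c, d}"
  using assms pow2_pair_ordered[of a b c d] pow2_pair_ordered[of b a c d]
    pow2_pair_ordered[of a b d c] pow2_pair_ordered[of b a d c]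
  by (metis add.commute insert_commute linorder_neqE_nat)

definition complete_edges :: "'a set \<Rightarrow> 'a set set" where
  "complete_edges V = {{u, v} | u v. u \<in> V \<and> v \<in> V \<and> u \<noteq> v}"

lemma complete_edges_iff: "{u, v} \<in> complete_edges V \<longleftrightarrow> u \<in> V \<and> v \<in> V \<and> u \<noteq> v"
  unfolding complete_edges_def by (auto simp: doubleton_eq_iff)

lemma complete_edges_two_subsets: "complete_edges V = {A. A \<subseteq> V \<and> card A = 2}"
  unfolding complete_edges_def by (auto simp: card_2_iff)

lemma finite_complete_edges: "finite V \<Longrightarrow> finite (complete_edges V)"
  unfolding complete_edges_two_subsets by (rule finite_subset[of _ "Pow V"]) auto

lemma card_complete_edges: "finite V \<Longrightarrow> card (complete_edges V) = card V choose 2"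
  unfolding complete_edges_two_subsets by (rule n_subsets)

lemma mono_edges_subset: "mono_edges E f \<subseteq> E"
  unfolding mono_edges_def by blast

lemma wiasi_edge_has_singleton_end:
  assumes f: "wiasi V E f" and e: "{u, v} \<in> E" "u \<noteq> v" and uv: "u \<in> V" "v \<in> V"
  shows "card (f u) = 1 \<or> card (f v) = 1"
proof (rule ccontr)
  assume neither: "\<not> (card (f u) = 1 \<or> card (f v) = 1)"
  have lab: "finite (f x)" "f x \<noteq> {}" if "x \<in> V" for x
    using f that unfolding wiasi_def iasi_def by auto
  have "card (f u) \<noteq> 0" "card (f v) \<noteq> 0" using lab uv by simp_all
  hence big: "card (f u) \<ge> 2" "card (f v) \<ge> 2" using neither by arith+
  have "card (f u) < card (sumset (f u) (f v))"
    by (rule card_lt_card_sumset[OF lab[OF uv(1)] lab(1)[OF uv(2)] big(2)])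
  moreover have "card (f v) < card (sumset (f v) (f u))"
    by (rule card_lt_card_sumset[OF lab[OF uv(2)] lab(1)[OF uv(1)] big(1)])
  moreover have "card (sumset (f u) (f v)) = max (card (f u)) (card (f v))"
    using f e unfolding wiasi_def by blast
  ultimately show False by (simp add: sumset_comm max_def split: if_splits)
qed

lemma mono_edge_if_singleton_ends:
  assumes "{u, v} \<in> E" "u \<noteq> v" "card (f u) = 1" "card (f v) = 1"
  shows "{u, v} \<in> mono_edges E f"
proof -
  obtain a b where "f u = {a}" "f v = {b}" using assms(3,4) by (meson card_1_singletonE)
  hence "card (sumset (f u) (f v)) = 1" by (simp add: sumset_singletons)
  thus ?thesis using assms(1,2) unfolding mono_edges_def by blast
qed

section \<open>The sparing number of a complete graph\<close>

text \<open>Lower bound: at most one vertex of a complete graph carries a non-singleton label,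
  so the remaining vertices span at least (|V|-1) choose 2 mono-indexed edges.\<close>
lemma complete_mono_edges_lower:
  assumes fin: "finite V" and g: "wiasi V (complete_edges V) g"
  shows "(card V - 1) choose 2 \<le> card (mono_edges (complete_edges V) g)"
proof -
  define S where "S = {v \<in> V. card (g v) = 1}"
  have "S \<subseteq> V" and finS: "finite S" using fin unfolding S_def by auto
  have "a = b" if ab: "a \<in> V - S" "b \<in> V - S" for a b
  proof (rule ccontr)
    assume "a \<noteq> b"
    hence "{a, b} \<in> complete_edges V" using ab by (simp add: complete_edges_iff)
    from wiasi_edge_has_singleton_end[OF g this \<open>a \<noteq> b\<close>] ab show False
      unfolding S_def by auto
  qed
  hence "card (V - S) \<le> 1" using fin by (simp add: card_le_Suc0_iff_eq)
  hence "card V - 1 \<le> card S"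
    using card_Diff_subset[OF finS \<open>S \<subseteq> V\<close>] card_mono[OF fin \<open>S \<subseteq> V\<close>] by linarith
  hence "(card V - 1) choose 2 \<le> card (complete_edges S)"
    using card_complete_edges[OF finS] binomial_right_mono by simp
  also have "complete_edges S \<subseteq> mono_edges (complete_edges V) g"
  proof
    fix e assume "e \<in> complete_edges S"
    then obtain u v where "e = {u, v}" "u \<in> S" "v \<in> S" "u \<noteq> v"
      unfolding complete_edges_def by blast
    moreover have "{u, v} \<in> complete_edges V"
      using calculation \<open>S \<subseteq> V\<close> by (auto simp: complete_edges_iff)
    ultimately show "e \<in> mono_edges (complete_edges V) g"
      using mono_edge_if_singleton_ends[of u v] unfolding S_def by simp
  qed
  hence "card (complete_edges S) \<le> card (mono_edges (complete_edges V) g)"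
    by (rule card_mono[OF finite_subset[OF mono_edges_subset finite_complete_edges[OF fin]]])
  finally show ?thesis .
qed

definition power_label :: "('a \<Rightarrow> nat) \<Rightarrow> 'a \<Rightarrow> 'a \<Rightarrow> nat set" where
  "power_label idx s v = (if v = s then {0, 2 ^ idx v} else {2 ^ idx v})"

lemma power_label_finite: "finite (power_label idx s v)" "power_label idx s v \<noteq> {}"
  unfolding power_label_def by auto

lemma power_label_Max: "Max (power_label idx s v) = 2 ^ idx v"
  unfolding power_label_def by auto

lemma card_power_label: "card (power_label idx s v) = (if v = s then 2 else 1)"
  unfolding power_label_def by simp

lemma card_sumset_power_label:
  assumes "u \<noteq> v"
  shows "card (sumset (power_label idx s u) (power_label idx s v)) = (if u = s \<or> v = s then 2 else 1)"
proof -
  have with_zero: "card (sumset {0, 2 ^ i} {2 ^ j}) = 2" for i j :: nat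
    by (simp add: sumset_zero_insert)
  consider "u = s" | "v = s" | "u \<noteq> s" "v \<noteq> s" by blast
  thus ?thesis
  proof cases
    case 1 thus ?thesis using assms with_zero by (simp add: power_label_def)
  next
    case 2 thus ?thesis using assms with_zero
      by (simp add: power_label_def sumset_comm[of "{2 ^ idx u}"])
  next
    case 3 thus ?thesis by (simp add: power_label_def sumset_singletons)
  qed
qed

text \<open>Distinct edges of the complete graph receive distinct labels: the maximum of an
  edge label is the sum of two distinct powers of two, which determines the edge.\<close>
lemma power_label_edge_injective:
  assumes inj: "inj_on idx V"
    and uv: "u \<in> V" "v \<in> V" "u \<noteq> v" and xy: "x \<in> V" "y \<in> V" "x \<noteq> y"
    and eq: "sumset (power_label idx s u) (power_label idx s v)
             = sumset (power_label idx s x) (power_label idx s y)"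
  shows "{u, v} = {x, y}"
proof -
  have "(2::nat) ^ idx u + 2 ^ idx v = 2 ^ idx x + 2 ^ idx y"
    using arg_cong[OF eq, of Max] by (simp add: sumset_Max power_label_finite power_label_Max)
  moreover have "idx u \<noteq> idx v" "idx x \<noteq> idx y" using uv xy inj by (auto dest: inj_onD)
  ultimately have "{idx u, idx v} = {idx x, idx y}" by (rule pow2_pair[rotated -1])
  hence images: "idx ` {u, v} = idx ` {x, y}" by simp
  have "{u, v} \<subseteq> V" "{x, y} \<subseteq> V" using uv xy by simp_all
  from this images show "{u, v} = {x, y}" by (rule inj_on_image_eq_iff[OF inj, THEN iffD1])
qed

lemma power_label_wiasi:
  assumes inj: "inj_on idx V"
  shows "wiasi V (complete_edges V) (power_label idx s)"
proof -
  let ?f = "power_label idx s"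
  have "inj_on ?f V"
  proof (rule inj_onI)
    fix x y assume "x \<in> V" "y \<in> V" "?f x = ?f y"
    hence "(2::nat) ^ idx x = 2 ^ idx y" using power_label_Max by metis
    thus "x = y" using inj \<open>x \<in> V\<close> \<open>y \<in> V\<close> by (simp add: inj_on_eq_iff)
  qed
  moreover have "{u, v} = {x, y}"
    if "{u, v} \<in> complete_edges V" "{x, y} \<in> complete_edges V"
       "sumset (?f u) (?f v) = sumset (?f x) (?f y)" for u v x y
    using that power_label_edge_injective[OF inj] by (simp add: complete_edges_iff)
  moreover have "card (sumset (?f u) (?f v)) = max (card (?f u)) (card (?f v))"
    if "u \<noteq> v" for u v
    using that by (simp add: card_sumset_power_label card_power_label)
  ultimately show ?thesis
    unfolding wiasi_def iasi_def by (simp add: power_label_finite)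
qed

lemma power_label_mono_edges:
  "mono_edges (complete_edges V) (power_label idx s) = complete_edges (V - {s})"
proof -
  have "{u, v} \<in> mono_edges (complete_edges V) (power_label idx s)
          \<longleftrightarrow> {u, v} \<in> complete_edges (V - {s})" for u v
  proof
    assume "{u, v} \<in> mono_edges (complete_edges V) (power_label idx s)"
    hence uv: "u \<in> V" "v \<in> V" "u \<noteq> v"
      and "\<exists>x y. {u, v} = {x, y} \<and> x \<noteq> y \<and>
             card (sumset (power_label idx s x) (power_label idx s y)) = 1"
      by (simp_all add: mono_edges_def complete_edges_iff)
    then obtain x y where xy: "{u, v} = {x, y}" "x \<noteq> y"
      and "card (sumset (power_label idx s x) (power_label idx s y)) = 1" by blast
    hence "x \<noteq> s" "y \<noteq> s" using card_sumset_power_label[OF xy(2)] by (auto split: if_splits)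
    with xy(1) have "u \<noteq> s" "v \<noteq> s" by (auto simp: doubleton_eq_iff)
    thus "{u, v} \<in> complete_edges (V - {s})" using uv by (simp add: complete_edges_iff)
  next
    assume "{u, v} \<in> complete_edges (V - {s})"
    hence uv: "{u, v} \<in> complete_edges V" "u \<noteq> v" and "u \<noteq> s" "v \<noteq> s"
      by (simp_all add: complete_edges_iff)
    hence "card (sumset (power_label idx s u) (power_label idx s v)) = 1"
      by (simp add: card_sumset_power_label)
    thus "{u, v} \<in> mono_edges (complete_edges V) (power_label idx s)"
      using uv unfolding mono_edges_def by blast
  qed
  moreover have "\<exists>u v. e = {u, v}"
    if "e \<in> mono_edges (complete_edges V) (power_label idx s) \<union> complete_edges (V - {s})" for e
    using that unfolding mono_edges_def complete_edges_def by blast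
  ultimately show ?thesis by blast
qed

theorem complete_sparing_number:
  assumes fin: "finite V" and "V \<noteq> {}"
  shows "sparing_number V (complete_edges V) = (card V - 1) choose 2"
  unfolding sparing_number_def
proof (rule Least_equality)
  obtain idx :: "'a \<Rightarrow> nat" where inj: "inj_on idx V"
    using finite_imp_inj_to_nat_seg[OF fin] by blast
  obtain s where "s \<in> V" using \<open>V \<noteq> {}\<close> by blast
  have "card (mono_edges (complete_edges V) (power_label idx s)) = (card V - 1) choose 2"
    using card_complete_edges[of "V - {s}"] fin \<open>s \<in> V\<close> by (simp add: power_label_mono_edges)
  thus "\<exists>f. wiasi V (complete_edges V) f \<and> (card V - 1) choose 2 = card (mono_edges (complete_edges V) f)"
    using power_label_wiasi[OF inj] by metis
qed (use complete_mono_edges_lower[OF fin] in blast)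

section \<open>Powers of the complete sun graph\<close>

lemma graph_power_complete:
  assumes "\<And>u v. u \<in> V \<Longrightarrow> v \<in> V \<Longrightarrow> u \<noteq> v \<Longrightarrow> within_dist E r u v"
  shows "graph_power V E r = complete_edges V"
  using assms unfolding graph_power_def complete_edges_def by blast

lemma within_dist_1: "{a, b} \<in> E \<Longrightarrow> 1 \<le> r \<Longrightarrow> within_dist E r a b"
  unfolding within_dist_def by (rule exI[of _ "[a, b]"]) auto

lemma within_dist_2: "{a, b} \<in> E \<Longrightarrow> {b, c} \<in> E \<Longrightarrow> 2 \<le> r \<Longrightarrow> within_dist E r a c"
  unfolding within_dist_def by (rule exI[of _ "[a, b, c]"]) (auto simp: less_Suc_eq)

lemma within_dist_3:
  "{a, b} \<in> E \<Longrightarrow> {b, c} \<in> E \<Longrightarrow> {c, d} \<in> E \<Longrightarrow> 3 \<le> r \<Longrightarrow> within_dist E r a d"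
  unfolding within_dist_def by (rule exI[of _ "[a, b, c, d]"]) (auto simp: less_Suc_eq)

lemma sun_clique_edge: "i < n \<Longrightarrow> k < n \<Longrightarrow> i \<noteq> k \<Longrightarrow> {Inl i, Inl k} \<in> sun_E n"
  unfolding sun_E_def by blast

lemma sun_pendant_edge:
  assumes "j < n" shows "{Inl j, Inr j} \<in> sun_E n" "{Inr j, Inl j} \<in> sun_E n"
proof -
  show "{Inl j, Inr j} \<in> sun_E n" using assms unfolding sun_E_def by blast
  thus "{Inr j, Inl j} \<in> sun_E n" by (simp add: insert_commute)
qed

text \<open>The complete sun graph has diameter at most 3: w_j reaches the clique through u_j.\<close>
lemma sun_within_dist:
  assumes "u \<in> sun_V n" "v \<in> sun_V n" "u \<noteq> v" "r \<ge> 3"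
  shows "within_dist (sun_E n) r u v"
proof -
  note edges = sun_clique_edge sun_pendant_edge
  have r: "1 \<le> r" "2 \<le> r" "3 \<le> r" using assms(4) by simp_all
  show ?thesis
  proof (cases u; cases v)
    fix i k assume "u = Inl i" "v = Inl k"
    thus ?thesis using assms(1-3) r by (auto simp: sun_V_def intro: within_dist_1 edges)
  next
    fix i j assume "u = Inl i" "v = Inr j"
    thus ?thesis using assms(1,2) r
      by (cases "i = j") (auto simp: sun_V_def intro: within_dist_1 within_dist_2 edges)
  next
    fix j i assume "u = Inr j" "v = Inl i"
    thus ?thesis using assms(1,2) r
      by (cases "i = j") (auto simp: sun_V_def intro: within_dist_1 within_dist_2 edges)
  next
    fix j k assume "u = Inr j" "v = Inr k"
    thus ?thesis using assms(1-3) r by (auto simp: sun_V_def intro: within_dist_3 edges)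
  qed
qed

lemma card_sun_V: "card (sun_V n) = 2 * n"
  unfolding sun_V_def by (subst card_Un_disjoint) (auto simp: card_image)

theorem mainTheorem6:
  fixes n r :: nat
  assumes "n \<ge> 4" and "r \<ge> 3"
  shows "sparing_number (sun_V n) (graph_power (sun_V n) (sun_E n) r) = (n - 1) * (2 * n - 1)"
proof -
  have "graph_power (sun_V n) (sun_E n) r = complete_edges (sun_V n)"
    by (rule graph_power_complete) (rule sun_within_dist[OF _ _ _ assms(2)])
  moreover have "finite (sun_V n)" "sun_V n \<noteq> {}"
    using assms(1) by (auto simp: sun_V_def lessThan_empty_iff)
  ultimately have "sparing_number (sun_V n) (graph_power (sun_V n) (sun_E n) r)
                     = (2 * n - 1) choose 2"
    by (simp add: complete_sparing_number card_sun_V)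
  also have "\<dots> = (n - 1) * (2 * n - 1)"
  proof -
    obtain m where m: "n = Suc m" using assms(1) by (cases n) auto
    have "(2 * n - 1) choose 2 = (2 * m + 1) * (2 * m) div 2" unfolding choose_two m by simp
    thus ?thesis using m by simp
  qed
  finally show ?thesis .
qed

end
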